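(* (i) The sequence $D_{2,1}=0$, $D_{2,m}=A_{2,m}-A_{2,m-1}$ ($m\geq2$) satisfies, for $m\geq 2$, $$D_{2,m}=\frac{m(2m-1)(2m+\lambda)}{(m-1+\lambda)(2m-2+\lambda)(2m-1+2\lambda)}D_{2,m-1}+\frac{2(m-1)m^2(m-1+\lambda)(m+\lambda)(2m-1+\lambda)(2m+\lambda)}{(2\lambda+1)(2m-1+2\lambda)},$$ and the solution of this recurrence with $D_{2,1}=0$ is $$D_{2,m}=\frac{2(m-1)m(m+\lambda)(m+\lambda+1)(2m+\lambda)\big[m^2+\lambda m-\frac{2}{2\lambda+3}\big]}{(2\lambda+1)(2\lambda+5)}.$$ (ii) The sequence $\widetilde D_{2,1}=0$, $\widetilde D_{2,m}=\widetilde A_{2,m}-\widetilde A_{2,m-1}$ ($m\geq2$) satisfies, for $m\geq2$, $$\widetilde D_{2,m}=\frac{(m-1)(2m-1)(2m-1+\lambda)}{(m-1+\lambda)(2m-3+\lambda)(2m-3+2\lambda)}\widetilde D_{2,m-1}+\frac{(m-1)(2m-1)(2m-2+\lambda)(2m-1+\lambda)\big[m^2+(\lambda-2)m-\lambda+\frac12\big]}{2(2\lambda+1)},$$ and the solution of this recurrence with $\widetilde D_{2,1}=0$ is $$\widetilde D_{2,m}=\frac{(m-1)(2m-1)(m+\lambda)(2m-1+\lambda)(2m-1+2\lambda)\big[m^2+(\lambda-1)m-\frac{2\lambda+1}{2}-\frac{2}{2\lambda+3}\big]}{2(2\lambda+1)(2\lambda+5)}.$$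
   Context: Fix $\lambda>-1/2$. Define polynomials $Q_m$ by $Q_0=1$, $Q_1(\mu)=1-\frac{2(\lambda+1)(\lambda+2)}{2\lambda+1}\mu$ and, for $m\geq2$, $$Q_m-Q_{m-1}=\frac{m(2m-1)(2m+\lambda)}{(m-1+\lambda)(2m-2+\lambda)(2m-1+2\lambda)}\big[Q_{m-1}-Q_{m-2}\big]-\frac{2m(2m-1+\lambda)(2m+\lambda)}{2m-1+2\lambda}\,\mu\,Q_{m-1}(\mu).$$ Define $\widetilde Q_m$ by $\widetilde Q_0=1$, $\widetilde Q_1(\mu)=1-\frac{\lambda+1}{2}\mu$ and, for $m\geq2$, $$\widetilde Q_m-\widetilde Q_{m-1}=\frac{(m-1)(2m-1)(2m-1+\lambda)}{(m-1+\lambda)(2m-3+\lambda)(2m-3+2\lambda)}\big[\widetilde Q_{m-1}-\widetilde Q_{m-2}\big]-\frac{(2m-1)(2m-2+\lambda)(2m-1+\lambda)}{2(m-1+\lambda)}\,\mu\,\widetilde Q_{m-1}(\mu).$$ Write $Q_m(\mu)=\sum_{i=0}^m(-1)^iA_{i,m}\mu^i$ and $\widetilde Q_m(\mu)=\sum_{i=0}^m(-1)^i\widetilde A_{i,m}\mu^i$, with $A_{i,m}=\widetilde A_{i,m}=0$ for $i>m$. *)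

theory Defs
  imports Complex_Main "HOL-Computational_Algebra.Polynomial"
begin

text \<open>Q l m is the polynomial Q_m in the variable mu, for parameter lambda = l.
  The clause for Suc (Suc n) is the recurrence with m = n + 2.\<close>

fun Q :: "real \<Rightarrow> nat \<Rightarrow> real poly" where
  "Q l 0 = 1"
| "Q l (Suc 0) = [:1, - (2 * (l + 1) * (l + 2) / (2 * l + 1)):]"
| "Q l (Suc (Suc n)) =
     (let m = real (Suc (Suc n)) in
      Q l (Suc n)
      + smult (m * (2*m - 1) * (2*m + l) / ((m - 1 + l) * (2*m - 2 + l) * (2*m - 1 + 2*l)))
              (Q l (Suc n) - Q l n)
      - smult (2 * m * (2*m - 1 + l) * (2*m + l) / (2*m - 1 + 2*l)) ([:0, 1:] * Q l (Suc n)))"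

fun Qt :: "real \<Rightarrow> nat \<Rightarrow> real poly" where
  "Qt l 0 = 1"
| "Qt l (Suc 0) = [:1, - ((l + 1) / 2):]"
| "Qt l (Suc (Suc n)) =
     (let m = real (Suc (Suc n)) in
      Qt l (Suc n)
      + smult ((m - 1) * (2*m - 1) * (2*m - 1 + l) / ((m - 1 + l) * (2*m - 3 + l) * (2*m - 3 + 2*l)))
              (Qt l (Suc n) - Qt l n)
      - smult ((2*m - 1) * (2*m - 2 + l) * (2*m - 1 + l) / (2 * (m - 1 + l))) ([:0, 1:] * Qt l (Suc n)))"

text \<open>Q_m(mu) = sum_i (-1)^i A_{i,m} mu^i; coeff is 0 beyond the degree.\<close>
definition A :: "real \<Rightarrow> nat \<Rightarrow> nat \<Rightarrow> real" where
  "A l i m = (-1) ^ i * coeff (Q l m) i"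

definition At :: "real \<Rightarrow> nat \<Rightarrow> nat \<Rightarrow> real" where
  "At l i m = (-1) ^ i * coeff (Qt l m) i"

definition D2 :: "real \<Rightarrow> nat \<Rightarrow> real" where
  "D2 l m = (if m \<le> 1 then 0 else A l 2 m - A l 2 (m - 1))"

definition Dt2 :: "real \<Rightarrow> nat \<Rightarrow> real" where
  "Dt2 l m = (if m \<le> 1 then 0 else At l 2 m - At l 2 (m - 1))"

end

theory Submission
  imports Defs
begin

text \<open>Comparing coefficients of \<open>\<mu>^i\<close> in the recurrence for \<open>Q_m\<close> gives
  \<open>A_{i,m} - A_{i,m-1} = r_m (A_{i,m-1} - A_{i,m-2}) + s_m A_{i-1,m-1}\<close>, where \<open>r_m\<close> and \<open>s_m\<close>
  are the two coefficients of the recurrence. Since \<open>A_{0,m} = 1\<close>, the case \<open>i = 1\<close> is a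
  two-step recurrence whose explicit solution is checked by induction; the case \<open>i = 2\<close> is then
  the first-order inhomogeneous recurrence for \<open>D_{2,m}\<close>, whose explicit solution is again checked
  by induction. Each induction step is an identity of rational functions in \<open>m\<close> and \<open>\<lambda>\<close>,
  valid because \<open>\<lambda> > -1/2\<close> keeps every denominator nonzero. The same argument applies
  verbatim to \<open>\<widetilde>Q_m\<close>.\<close>

lemma coeff_0_recurrence:
  fixes p q p' :: "'a::comm_ring_1 poly"
  assumes "p' = p + smult r (p - q) - smult s ([:0, 1:] * p)"
  shows "coeff p' 0 - coeff p 0 = r * (coeff p 0 - coeff q 0)"
  unfolding assms by (simp add: algebra_simps)

lemma signed_coeff_Suc_recurrence:
  fixes p q p' :: "'a::comm_ring_1 poly"
  assumes "p' = p + smult r (p - q) - smult s ([:0, 1:] * p)"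
  shows "(-1)^Suc i * coeff p' (Suc i) - (-1)^Suc i * coeff p (Suc i)
    = r * ((-1)^Suc i * coeff p (Suc i) - (-1)^Suc i * coeff q (Suc i)) + s * ((-1)^i * coeff p i)"
proof -
  have "coeff p' (Suc i) - coeff p (Suc i) = r * (coeff p (Suc i) - coeff q (Suc i)) - s * coeff p i"
    unfolding assms by (simp add: algebra_simps)
  then have "(-1)^Suc i * (coeff p' (Suc i) - coeff p (Suc i))
      = (-1)^Suc i * (r * (coeff p (Suc i) - coeff q (Suc i)) - s * coeff p i)"
    by (simp only:)
  then show ?thesis
    by (simp add: algebra_simps)
qed

definition Q_diff_coeff :: "real \<Rightarrow> real \<Rightarrow> real" where
  "Q_diff_coeff l m = m * (2*m - 1) * (2*m + l) / ((m - 1 + l) * (2*m - 2 + l) * (2*m - 1 + 2*l))"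

definition Q_mu_coeff :: "real \<Rightarrow> real \<Rightarrow> real" where
  "Q_mu_coeff l m = 2 * m * (2*m - 1 + l) * (2*m + l) / (2*m - 1 + 2*l)"

definition Qt_diff_coeff :: "real \<Rightarrow> real \<Rightarrow> real" where
  "Qt_diff_coeff l m = (m - 1) * (2*m - 1) * (2*m - 1 + l) / ((m - 1 + l) * (2*m - 3 + l) * (2*m - 3 + 2*l))"

definition Qt_mu_coeff :: "real \<Rightarrow> real \<Rightarrow> real" where
  "Qt_mu_coeff l m = (2*m - 1) * (2*m - 2 + l) * (2*m - 1 + l) / (2 * (m - 1 + l))"

lemma Q_Suc_Suc:
  "Q l (Suc (Suc n)) = Q l (Suc n) + smult (Q_diff_coeff l (Suc (Suc n))) (Q l (Suc n) - Q l n)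
     - smult (Q_mu_coeff l (Suc (Suc n))) ([:0, 1:] * Q l (Suc n))"
  by (simp only: Q.simps Let_def Q_diff_coeff_def Q_mu_coeff_def)

lemma Qt_Suc_Suc:
  "Qt l (Suc (Suc n)) = Qt l (Suc n) + smult (Qt_diff_coeff l (Suc (Suc n))) (Qt l (Suc n) - Qt l n)
     - smult (Qt_mu_coeff l (Suc (Suc n))) ([:0, 1:] * Qt l (Suc n))"
  by (simp only: Qt.simps Let_def Qt_diff_coeff_def Qt_mu_coeff_def)

lemma A_0: "A l 0 n = 1"
proof -
  have "coeff (Q l n) 0 = 1 \<and> coeff (Q l (Suc n)) 0 = 1"
    by (induction n) (use coeff_0_recurrence[OF Q_Suc_Suc] in auto)
  then show ?thesis by (simp add: A_def)
qed

lemma At_0: "At l 0 n = 1"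
proof -
  have "coeff (Qt l n) 0 = 1 \<and> coeff (Qt l (Suc n)) 0 = 1"
    by (induction n) (use coeff_0_recurrence[OF Qt_Suc_Suc] in auto)
  then show ?thesis by (simp add: At_def)
qed

lemma A_Suc_recurrence:
  "A l (Suc i) (Suc (Suc n)) - A l (Suc i) (Suc n)
     = Q_diff_coeff l (Suc (Suc n)) * (A l (Suc i) (Suc n) - A l (Suc i) n)
       + Q_mu_coeff l (Suc (Suc n)) * A l i (Suc n)"
  unfolding A_def by (rule signed_coeff_Suc_recurrence[OF Q_Suc_Suc])

lemma At_Suc_recurrence:
  "At l (Suc i) (Suc (Suc n)) - At l (Suc i) (Suc n)
     = Qt_diff_coeff l (Suc (Suc n)) * (At l (Suc i) (Suc n) - At l (Suc i) n)
       + Qt_mu_coeff l (Suc (Suc n)) * At l i (Suc n)"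
  unfolding At_def by (rule signed_coeff_Suc_recurrence[OF Qt_Suc_Suc])

definition A1_formula :: "real \<Rightarrow> real \<Rightarrow> real" where
  "A1_formula l m = m * (m + 1) * (m + l) * (m + 1 + l) / (2*l + 1)"

definition At1_formula :: "real \<Rightarrow> real \<Rightarrow> real" where
  "At1_formula l m = m * (m + l) * ((m + 1)^2 + (l - 2) * (m + 1) - l + 1/2) / (2*l + 1)"

definition D2_formula :: "real \<Rightarrow> real \<Rightarrow> real" where
  "D2_formula l m = 2 * (m - 1) * m * (m + l) * (m + l + 1) * (2 * m + l)
     * (m ^ 2 + l * m - 2 / (2 * l + 3)) / ((2 * l + 1) * (2 * l + 5))"

definition Dt2_formula :: "real \<Rightarrow> real \<Rightarrow> real" where
  "Dt2_formula l m = (m - 1) * (2 * m - 1) * (m + l) * (2 * m - 1 + l) * (2 * m - 1 + 2 * l)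
     * (m ^ 2 + (l - 1) * m - (2 * l + 1) / 2 - 2 / (2 * l + 3)) / (2 * (2 * l + 1) * (2 * l + 5))"

lemma A1_formula_recurrence:
  fixes l y :: real
  assumes "l > -1/2" "y \<ge> 2"
  shows "A1_formula l y - A1_formula l (y - 1)
    = Q_diff_coeff l y * (A1_formula l (y - 1) - A1_formula l (y - 2)) + Q_mu_coeff l y"
proof -
  have "2*l + 1 \<noteq> 0" "y - 1 + l \<noteq> 0" "2*y - 2 + l \<noteq> 0" "2*y - 1 + 2*l \<noteq> 0"
    using assms by auto
  then show ?thesis
    unfolding A1_formula_def Q_diff_coeff_def Q_mu_coeff_def
    by (simp add: divide_simps) algebra
qed

lemma At1_formula_recurrence:
  fixes l y :: real
  assumes "l > -1/2" "y \<ge> 2"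
  shows "At1_formula l y - At1_formula l (y - 1)
    = Qt_diff_coeff l y * (At1_formula l (y - 1) - At1_formula l (y - 2)) + Qt_mu_coeff l y"
proof -
  have "2*l + 1 \<noteq> 0" "y - 1 + l \<noteq> 0" "2*y - 3 + l \<noteq> 0" "2*y - 3 + 2*l \<noteq> 0"
    using assms by auto
  then show ?thesis
    unfolding At1_formula_def Qt_diff_coeff_def Qt_mu_coeff_def
    by (simp add: divide_simps) algebra
qed

lemma D2_formula_recurrence:
  fixes l y :: real
  assumes "l > -1/2" "y \<ge> 2"
  shows "D2_formula l y = Q_diff_coeff l y * D2_formula l (y - 1) + Q_mu_coeff l y * A1_formula l (y - 1)"
proof -
  have "2*l + 1 \<noteq> 0" "2*l + 3 \<noteq> 0" "2*l + 5 \<noteq> 0"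
    "y - 1 + l \<noteq> 0" "2*y - 2 + l \<noteq> 0" "2*y - 1 + 2*l \<noteq> 0"
    using assms by auto
  then show ?thesis
    unfolding D2_formula_def A1_formula_def Q_diff_coeff_def Q_mu_coeff_def
    by (simp add: divide_simps) algebra
qed

lemma Dt2_formula_recurrence:
  fixes l y :: real
  assumes "l > -1/2" "y \<ge> 2"
  shows "Dt2_formula l y = Qt_diff_coeff l y * Dt2_formula l (y - 1) + Qt_mu_coeff l y * At1_formula l (y - 1)"
proof -
  have "2*l + 1 \<noteq> 0" "2*l + 3 \<noteq> 0" "2*l + 5 \<noteq> 0"
    "y - 1 + l \<noteq> 0" "2*y - 3 + l \<noteq> 0" "2*y - 3 + 2*l \<noteq> 0"
    using assms by auto
  then show ?thesis
    unfolding Dt2_formula_def At1_formula_def Qt_diff_coeff_def Qt_mu_coeff_def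
    by (simp add: divide_simps) algebra
qed

lemma Q_mu_coeff_A1_formula:
  "Q_mu_coeff l y * A1_formula l (y - 1)
    = 2 * (y - 1) * y ^ 2 * (y - 1 + l) * (y + l) * (2 * y - 1 + l) * (2 * y + l)
      / ((2 * l + 1) * (2 * y - 1 + 2 * l))"
  unfolding Q_mu_coeff_def A1_formula_def divide_inverse inverse_mult_distrib
  by (simp add: algebra_simps power2_eq_square)

lemma Qt_mu_coeff_At1_formula:
  fixes l y :: real
  assumes "l > -1/2" "y \<ge> 2"
  shows "Qt_mu_coeff l y * At1_formula l (y - 1)
    = (y - 1) * (2 * y - 1) * (2 * y - 2 + l) * (2 * y - 1 + l) * (y ^ 2 + (l - 2) * y - l + 1 / 2)
      / (2 * (2 * l + 1))"
proof -
  have "2*l + 1 \<noteq> 0" "y - 1 + l \<noteq> 0"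
    using assms by auto
  then show ?thesis
    unfolding Qt_mu_coeff_def At1_formula_def
    by (simp add: divide_simps) algebra
qed

lemma A_1_eq_A1_formula:
  assumes "l > -1/2"
  shows "A l 1 n = A1_formula l (real n)"
proof (induction n rule: induct_nat_012)
  case 0
  then show ?case by (simp add: A_def A1_formula_def)
next
  case 1
  have "2*l + 1 \<noteq> 0" using assms by auto
  then show ?case by (simp add: A_def A1_formula_def field_simps)
next
  case (ge2 n)
  have "A l 1 (Suc (Suc n)) = A l 1 (Suc n)
      + Q_diff_coeff l (Suc (Suc n)) * (A l 1 (Suc n) - A l 1 n) + Q_mu_coeff l (Suc (Suc n))"
    using A_Suc_recurrence[of l 0 n] by (simp add: A_0)
  also have "\<dots> = A1_formula l (Suc (Suc n))"
    using A1_formula_recurrence[OF assms, of "Suc (Suc n)"] ge2 by simp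
  finally show ?case .
qed

lemma At_1_eq_At1_formula:
  assumes "l > -1/2"
  shows "At l 1 n = At1_formula l (real n)"
proof (induction n rule: induct_nat_012)
  case 0
  then show ?case by (simp add: At_def At1_formula_def)
next
  case 1
  have "2*l + 1 \<noteq> 0" using assms by auto
  then show ?case by (simp add: At_def At1_formula_def field_simps)
next
  case (ge2 n)
  have "At l 1 (Suc (Suc n)) = At l 1 (Suc n)
      + Qt_diff_coeff l (Suc (Suc n)) * (At l 1 (Suc n) - At l 1 n) + Qt_mu_coeff l (Suc (Suc n))"
    using At_Suc_recurrence[of l 0 n] by (simp add: At_0)
  also have "\<dots> = At1_formula l (Suc (Suc n))"
    using At1_formula_recurrence[OF assms, of "Suc (Suc n)"] ge2 by simp
  finally show ?case .
qed

lemma D2_recurrence: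
  assumes "m \<ge> 2"
  shows "D2 l m = Q_diff_coeff l m * D2 l (m - 1) + Q_mu_coeff l m * A l 1 (m - 1)"
proof -
  obtain n where m: "m = Suc (Suc n)"
    using assms by (metis add_2_eq_Suc le_Suc_ex)
  have "D2 l (Suc k) = A l 2 (Suc k) - A l 2 k" for k
    by (cases k) (simp_all add: D2_def A_def numeral_2_eq_2)
  then show ?thesis
    using A_Suc_recurrence[of l 1 n] unfolding m by (simp add: numeral_2_eq_2)
qed

lemma Dt2_recurrence:
  assumes "m \<ge> 2"
  shows "Dt2 l m = Qt_diff_coeff l m * Dt2 l (m - 1) + Qt_mu_coeff l m * At l 1 (m - 1)"
proof -
  obtain n where m: "m = Suc (Suc n)"
    using assms by (metis add_2_eq_Suc le_Suc_ex)
  have "Dt2 l (Suc k) = At l 2 (Suc k) - At l 2 k" for k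
    by (cases k) (simp_all add: Dt2_def At_def numeral_2_eq_2)
  then show ?thesis
    using At_Suc_recurrence[of l 1 n] unfolding m by (simp add: numeral_2_eq_2)
qed

lemma D2_eq_D2_formula:
  assumes "l > -1/2" "m \<ge> 1"
  shows "D2 l m = D2_formula l (real m)"
  using assms(2)
proof (induction m rule: nat_induct_at_least)
  case base
  then show ?case by (simp add: D2_def D2_formula_def)
next
  case (Suc m)
  then show ?case
    using D2_recurrence[of "Suc m" l] D2_formula_recurrence[OF assms(1), of "Suc m"]
      A_1_eq_A1_formula[OF assms(1), of m] by simp
qed

lemma Dt2_eq_Dt2_formula:
  assumes "l > -1/2" "m \<ge> 1"
  shows "Dt2 l m = Dt2_formula l (real m)"
  using assms(2)
proof (induction m rule: nat_induct_at_least)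
  case base
  then show ?case by (simp add: Dt2_def Dt2_formula_def)
next
  case (Suc m)
  then show ?case
    using Dt2_recurrence[of "Suc m" l] Dt2_formula_recurrence[OF assms(1), of "Suc m"]
      At_1_eq_At1_formula[OF assms(1), of m] by simp
qed

theorem lemma3p3:
  fixes l :: real
  assumes hl: "l > - 1 / 2"
  shows
   "(\<forall>m::nat. m \<ge> 2 \<longrightarrow>
       D2 l m = real m * (2 * real m - 1) * (2 * real m + l)
                 / ((real m - 1 + l) * (2 * real m - 2 + l) * (2 * real m - 1 + 2 * l)) * D2 l (m - 1)
              + 2 * (real m - 1) * real m ^ 2 * (real m - 1 + l) * (real m + l) * (2 * real m - 1 + l)
                 * (2 * real m + l) / ((2 * l + 1) * (2 * real m - 1 + 2 * l)))
  \<and> (\<forall>m::nat. m \<ge> 1 \<longrightarrow>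
       D2 l m = 2 * (real m - 1) * real m * (real m + l) * (real m + l + 1) * (2 * real m + l)
                 * (real m ^ 2 + l * real m - 2 / (2 * l + 3)) / ((2 * l + 1) * (2 * l + 5)))
  \<and> (\<forall>m::nat. m \<ge> 2 \<longrightarrow>
       Dt2 l m = (real m - 1) * (2 * real m - 1) * (2 * real m - 1 + l)
                 / ((real m - 1 + l) * (2 * real m - 3 + l) * (2 * real m - 3 + 2 * l)) * Dt2 l (m - 1)
              + (real m - 1) * (2 * real m - 1) * (2 * real m - 2 + l) * (2 * real m - 1 + l)
                 * (real m ^ 2 + (l - 2) * real m - l + 1 / 2) / (2 * (2 * l + 1)))
  \<and> (\<forall>m::nat. m \<ge> 1 \<longrightarrow>
       Dt2 l m = (real m - 1) * (2 * real m - 1) * (real m + l) * (2 * real m - 1 + l) * (2 * real m - 1 + 2 * l)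
                 * (real m ^ 2 + (l - 1) * real m - (2 * l + 1) / 2 - 2 / (2 * l + 3))
                 / (2 * (2 * l + 1) * (2 * l + 5)))"
  apply (intro conjI allI impI)
  subgoal for m
    using D2_recurrence[of m l] A_1_eq_A1_formula[OF hl, of "m - 1"] Q_mu_coeff_A1_formula[of l m]
    by (simp add: of_nat_diff Q_diff_coeff_def)
  subgoal for m
    using D2_eq_D2_formula[OF hl, of m] by (simp add: D2_formula_def)
  subgoal for m
    using Dt2_recurrence[of m l] At_1_eq_At1_formula[OF hl, of "m - 1"]
      Qt_mu_coeff_At1_formula[OF hl, of m]
    by (simp add: of_nat_diff Qt_diff_coeff_def)
  subgoal for m
    using Dt2_eq_Dt2_formula[OF hl, of m] by (simp add: Dt2_formula_def)
  done

end
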